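(* Let $\mathcal{X},\mathcal{Y}$ be finite sets, $\mathcal{S}\subseteq\mathcal{X}\times\mathcal{Y}$, and $f:\mathcal{S}\to\{0,1\}$ with $f^{-1}(0)$ and $f^{-1}(1)$ both nonempty. Let $\sigma$ be the uniform distribution on $\mathcal{X}\times\mathcal{Y}$ and, for $b\in\{0,1\}$, $\sigma_b$ the uniform distribution on $f^{-1}(b)$. Suppose $c>0$ is such that for every rectangle $R\subseteq\mathcal{X}\times\mathcal{Y}$ and every $b\in\{0,1\}$, $$\sigma_b(R\cap f^{-1}(b))\ge0.8\,\sigma(R)-c.$$ Then for every $\varepsilon\ge0$, $\overline{\mathrm{prt}}_\varepsilon(f)\ge\frac{1}{c}(0.8-2.8\varepsilon)$.
   Context: Rectangles are $A\times B$ with $A\subseteq\mathcal{X}$, $B\subseteq\mathcal{Y}$ (including the empty one). For a distribution $\mu$ on $\mathcal{X}\times\mathcal{Y}$, $\overline{\mathrm{prt}}^\mu_\varepsilon(f)$ is the value of: minimize $1/\eta$ over $\eta>0$ and $p_{R,z}\ge0$ ($R$ all rectangles, $z\in\{0,1\}$) s.t. (i) $\sum_{(x,y)\in\mathcal{S}}\mu(x,y)\sum_{R\ni(x,y)}p_{R,f(x,y)}+\sum_{(x,y)\notin\mathcal{S}}\mu(x,y)\sum_{z,R\ni(x,y)}p_{R,z}\ge(1-\varepsilon)\eta$; (ii) $\forall(x,y)\in\mathcal{X}\times\mathcal{Y}$: $\sum_{z,R\ni(x,y)}p_{R,z}\le\eta$; (iii) $\sum_{R,z}p_{R,z}=1$.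 $\overline{\mathrm{prt}}_\varepsilon(f)=\max_\mu\overline{\mathrm{prt}}^\mu_\varepsilon(f)$. *)

theory Defs
  imports Main "HOL-Library.Extended_Real"
begin

definition rectangles :: "'a set \<Rightarrow> 'b set \<Rightarrow> ('a \<times> 'b) set set" where
  "rectangles X Y = {A \<times> B | A B. A \<subseteq> X \<and> B \<subseteq> Y}"

definition distribution :: "'a set \<Rightarrow> 'b set \<Rightarrow> ('a \<times> 'b \<Rightarrow> real) \<Rightarrow> bool" where
  "distribution X Y \<mu> \<longleftrightarrow> (\<forall>s\<in>X \<times> Y. \<mu> s \<ge> 0) \<and> (\<Sum>s\<in>X \<times> Y. \<mu> s) = 1"

(* feasibility of (\<eta>, p) in the LP defining prt-bar^\<mu>_\<epsilon>(f);
   p R z for R a rectangle and z \<in> {0,1} *)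
definition prt_feasible ::
  "'a set \<Rightarrow> 'b set \<Rightarrow> ('a \<times> 'b) set \<Rightarrow> ('a \<times> 'b \<Rightarrow> nat) \<Rightarrow> real \<Rightarrow>
   ('a \<times> 'b \<Rightarrow> real) \<Rightarrow> real \<Rightarrow> (('a \<times> 'b) set \<Rightarrow> nat \<Rightarrow> real) \<Rightarrow> bool" where
  "prt_feasible X Y S f \<epsilon> \<mu> \<eta> p \<longleftrightarrow>
     \<eta> > 0 \<and>
     (\<forall>R\<in>rectangles X Y. \<forall>z\<in>{0,1}. p R z \<ge> 0) \<and>
     (\<Sum>s\<in>S. \<mu> s * (\<Sum>R\<in>{R\<in>rectangles X Y. s \<in> R}. p R (f s)))
       + (\<Sum>s\<in>(X \<times> Y) - S. \<mu> s * (\<Sum>z\<in>{0::nat,1}. \<Sum>R\<in>{R\<in>rectangles X Y. s \<in> R}. p R z))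
       \<ge> (1 - \<epsilon>) * \<eta> \<and>
     (\<forall>s\<in>X \<times> Y. (\<Sum>z\<in>{0::nat,1}. \<Sum>R\<in>{R\<in>rectangles X Y. s \<in> R}. p R z) \<le> \<eta>) \<and>
     (\<Sum>z\<in>{0::nat,1}. \<Sum>R\<in>rectangles X Y. p R z) = 1"

definition prt_mu ::
  "'a set \<Rightarrow> 'b set \<Rightarrow> ('a \<times> 'b) set \<Rightarrow> ('a \<times> 'b \<Rightarrow> nat) \<Rightarrow> real \<Rightarrow>
   ('a \<times> 'b \<Rightarrow> real) \<Rightarrow> real" where
  "prt_mu X Y S f \<epsilon> \<mu> = Inf {1 / \<eta> | \<eta> p. prt_feasible X Y S f \<epsilon> \<mu> \<eta> p}"

definition prt_bar ::
  "'a set \<Rightarrow> 'b set \<Rightarrow> ('a \<times> 'b) set \<Rightarrow> ('a \<times> 'b \<Rightarrow> nat) \<Rightarrow> real \<Rightarrow> real" where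
  "prt_bar X Y S f \<epsilon> = Sup {prt_mu X Y S f \<epsilon> \<mu> | \<mu>. distribution X Y \<mu>}"

end

theory Submission
  imports Defs
begin

(* Idea.  prt-bar_eps(f) is a supremum over input distributions mu of LP optima, so it suffices
   to exhibit one hard distribution mu = 2/7 sigma + 5/14 sigma_0 + 5/14 sigma_1 and bound every
   feasible point (eta, p) of its LP.  Write cover_z(s) for the weight that p puts on rectangles
   with answer z containing s.  Since every rectangle R is spread over the label class
   f^-1(b) (at least 0.8 sigma(R) - c of it), answering 1-b on R necessarily hits f^-1(b); by
   double counting the wrong-answer mass on f^-1(b) is large, and since cover_0 + cover_1 <= eta
   the correct-answer mass there is small.  Weighing the two classes with 5/14 against the
   uniform part 2/7 cancels the total coverage terms and leaves (1 - eps) eta <= 5/7 eta + 5/14 c,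
   i.e. (0.8 - 2.8 eps) eta <= c, hence prt-bar^mu_eps(f) >= (0.8 - 2.8 eps)/c. *)

definition cover :: "'a set \<Rightarrow> 'b set \<Rightarrow> (('a \<times> 'b) set \<Rightarrow> nat \<Rightarrow> real) \<Rightarrow> nat \<Rightarrow> 'a \<times> 'b \<Rightarrow> real" where
  "cover X Y p z s = (\<Sum>R\<in>{R\<in>rectangles X Y. s \<in> R}. p R z)"

lemma finite_rectangles: "finite X \<Longrightarrow> finite Y \<Longrightarrow> finite (rectangles X Y)"
  by (rule finite_subset[of _ "Pow (X \<times> Y)"]) (auto simp: rectangles_def)

lemma rectangle_subset: "R \<in> rectangles X Y \<Longrightarrow> R \<subseteq> X \<times> Y"
  by (auto simp: rectangles_def)

lemma singleton_rectangle: "s \<in> X \<times> Y \<Longrightarrow> {s} \<in> rectangles X Y"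
  by (cases s) (auto simp: rectangles_def intro!: exI[of _ "{fst s}"] exI[of _ "{snd s}"])

lemma prt_feasible_cover:
  "prt_feasible X Y S f \<epsilon> \<mu> \<eta> p \<longleftrightarrow>
     \<eta> > 0 \<and> (\<forall>R\<in>rectangles X Y. p R 0 \<ge> 0 \<and> p R 1 \<ge> 0) \<and>
     (1 - \<epsilon>) * \<eta> \<le> (\<Sum>s\<in>S. \<mu> s * cover X Y p (f s) s)
        + (\<Sum>s\<in>X \<times> Y - S. \<mu> s * (cover X Y p 0 s + cover X Y p 1 s)) \<and>
     (\<forall>s\<in>X \<times> Y. cover X Y p 0 s + cover X Y p 1 s \<le> \<eta>) \<and>
     (\<Sum>R\<in>rectangles X Y. p R 0) + (\<Sum>R\<in>rectangles X Y. p R 1) = 1"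
  by (simp add: prt_feasible_def cover_def)

lemma sum_cover:
  assumes "finite X" "finite Y" "finite T"
  shows "(\<Sum>s\<in>T. cover X Y p z s) = (\<Sum>R\<in>rectangles X Y. p R z * card (T \<inter> R))"
proof -
  have "(\<Sum>s\<in>T. cover X Y p z s) = (\<Sum>s\<in>T. \<Sum>R\<in>rectangles X Y. if s \<in> R then p R z else 0)"
    by (simp add: cover_def sum.inter_filter finite_rectangles assms)
  also have "\<dots> = (\<Sum>R\<in>rectangles X Y. \<Sum>s\<in>T. if s \<in> R then p R z else 0)"
    by (rule sum.swap)
  also have "\<dots> = (\<Sum>R\<in>rectangles X Y. p R z * card (T \<inter> R))"
    by (simp add: sum.inter_restrict[OF assms(3), symmetric] mult.commute)
  finally show ?thesis .
qed

lemma sum_cover_total: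
  assumes "finite X" "finite Y"
  shows "(\<Sum>s\<in>X \<times> Y. cover X Y p z s) = (\<Sum>R\<in>rectangles X Y. p R z * card R)"
  unfolding sum_cover[OF assms finite_cartesian_product[OF assms]]
  by (intro sum.cong refl) (simp add: rectangle_subset Int_absorb1)

lemma cover_nonneg:
  "(\<And>R. R \<in> rectangles X Y \<Longrightarrow> p R z \<ge> 0) \<Longrightarrow> cover X Y p z s \<ge> 0"
  unfolding cover_def by (rule sum_nonneg) auto

(* The trivial protocol answering every input correctly by its singleton rectangle is feasible
   with eta = 1/|X x Y|, for every distribution and every eps >= 0. *)
lemma trivial_protocol_feasible:
  assumes X: "finite X" and Y: "finite Y" and SXY: "S \<subseteq> X \<times> Y"
    and f01: "\<forall>s\<in>S. f s \<in> {0, 1}" and ne: "X \<times> Y \<noteq> {}"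
    and \<mu>: "distribution X Y \<mu>" and \<epsilon>: "\<epsilon> \<ge> 0"
  shows "\<exists>p. prt_feasible X Y S f \<epsilon> \<mu> (1 / card (X \<times> Y)) p"
proof -
  define N where "N = real (card (X \<times> Y))"
  have N: "N > 0" using ne X Y by (simp add: N_def card_gt_0_iff)
  define g where "g s = (if s \<in> S then f s else 0)" for s
  define p where "p R z = (if \<exists>t\<in>X \<times> Y. R = {t} \<and> z = g t then 1 / N else 0)" for R z
  have cover_p: "cover X Y p z s = (if z = g s then 1 / N else 0)" if s: "s \<in> X \<times> Y" for z s
  proof -
    have "cover X Y p z s = (\<Sum>R\<in>{R\<in>rectangles X Y. s \<in> R}. if R = {s} then p {s} z else 0)"
      unfolding cover_def using s by (intro sum.cong refl) (auto simp: p_def)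
    also have "\<dots> = p {s} z"
      using singleton_rectangle[OF s] by (simp add: finite_rectangles X Y)
    finally show ?thesis using s by (auto simp: p_def)
  qed
  have both: "cover X Y p 0 s + cover X Y p 1 s = 1 / N" if "s \<in> X \<times> Y" for s
    using f01 that by (auto simp: cover_p g_def)
  have correct: "cover X Y p (f s) s = 1 / N" if "s \<in> S" for s
    using that SXY by (subst cover_p) (auto simp: g_def)
  have "(\<Sum>s\<in>S. \<mu> s * cover X Y p (f s) s) + (\<Sum>s\<in>X \<times> Y - S. \<mu> s * (cover X Y p 0 s + cover X Y p 1 s))
      = (\<Sum>s\<in>S. \<mu> s / N) + (\<Sum>s\<in>X \<times> Y - S. \<mu> s / N)"
    using correct both by (intro arg_cong2[where f="(+)"] sum.cong) auto
  also have "\<dots> = (\<Sum>s\<in>X \<times> Y. \<mu> s) / N"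
    using sum.subset_diff[OF SXY, of "\<lambda>s. \<mu> s / N"] X Y by (simp add: sum_divide_distrib)
  also have "\<dots> \<ge> (1 - \<epsilon>) * (1 / N)"
    using \<mu> \<epsilon> N by (simp add: distribution_def divide_right_mono)
  finally have success: "(1 - \<epsilon>) * (1 / N) \<le> (\<Sum>s\<in>S. \<mu> s * cover X Y p (f s) s)
      + (\<Sum>s\<in>X \<times> Y - S. \<mu> s * (cover X Y p 0 s + cover X Y p 1 s))" .
  (* only singleton rectangles carry weight, so the total weight is the total coverage *)
  have weight: "(\<Sum>R\<in>rectangles X Y. p R z) = (\<Sum>s\<in>X \<times> Y. cover X Y p z s)" for z
  proof -
    have "(\<Sum>R\<in>rectangles X Y. p R z) = (\<Sum>R\<in>rectangles X Y. p R z * card R)"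
      by (intro sum.cong refl) (auto simp: p_def)
    then show ?thesis by (simp add: sum_cover_total X Y)
  qed
  have "(\<Sum>R\<in>rectangles X Y. p R 0) + (\<Sum>R\<in>rectangles X Y. p R 1)
      = (\<Sum>s\<in>X \<times> Y. cover X Y p 0 s + cover X Y p 1 s)"
    by (simp only: weight sum.distrib)
  also have "\<dots> = (\<Sum>s\<in>X \<times> Y. 1 / N)"
    using both by (intro sum.cong) auto
  finally have total: "(\<Sum>R\<in>rectangles X Y. p R 0) + (\<Sum>R\<in>rectangles X Y. p R 1) = 1"
    using N by (simp add: N_def)
  have "prt_feasible X Y S f \<epsilon> \<mu> (1 / N) p"
    unfolding prt_feasible_cover using N success total both by (auto simp: p_def)
  then show ?thesis unfolding N_def by blast
qed

(* Every LP value is at most |X x Y| (by the trivial protocol), so the supremum defining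
   prt-bar is attained from above by each prt-bar^mu. *)
lemma prt_mu_le_prt_bar:
  assumes X: "finite X" and Y: "finite Y" and SXY: "S \<subseteq> X \<times> Y"
    and f01: "\<forall>s\<in>S. f s \<in> {0, 1}" and ne: "X \<times> Y \<noteq> {}"
    and \<mu>: "distribution X Y \<mu>" and \<epsilon>: "\<epsilon> \<ge> 0"
  shows "prt_mu X Y S f \<epsilon> \<mu> \<le> prt_bar X Y S f \<epsilon>"
proof -
  have "prt_mu X Y S f \<epsilon> \<nu> \<le> card (X \<times> Y)" if \<nu>: "distribution X Y \<nu>" for \<nu>
  proof -
    obtain p where "prt_feasible X Y S f \<epsilon> \<nu> (1 / card (X \<times> Y)) p"
      using trivial_protocol_feasible[OF X Y SXY f01 ne \<nu> \<epsilon>] by blast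
    then have "1 / (1 / card (X \<times> Y)) \<in> {1 / \<eta> | \<eta> p. prt_feasible X Y S f \<epsilon> \<nu> \<eta> p}"
      by blast
    moreover have "bdd_below {1 / \<eta> | \<eta> p. prt_feasible X Y S f \<epsilon> \<nu> \<eta> p}"
      by (rule bdd_belowI[of _ 0]) (auto simp: prt_feasible_def)
    ultimately have "prt_mu X Y S f \<epsilon> \<nu> \<le> 1 / (1 / card (X \<times> Y))"
      unfolding prt_mu_def by (rule cInf_lower)
    then show ?thesis by simp
  qed
  then have "bdd_above {prt_mu X Y S f \<epsilon> \<nu> | \<nu>. distribution X Y \<nu>}"
    by (intro bdd_aboveI) blast
  then show ?thesis
    unfolding prt_bar_def using \<mu> by (intro cSup_upper) blast+
qed

lemma prt_mu_lower_bound: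
  assumes "\<exists>\<eta> p. prt_feasible X Y S f \<epsilon> \<mu> \<eta> p"
    and "\<And>\<eta> p. prt_feasible X Y S f \<epsilon> \<mu> \<eta> p \<Longrightarrow> L * \<eta> \<le> 1"
  shows "L \<le> prt_mu X Y S f \<epsilon> \<mu>"
  unfolding prt_mu_def
proof (rule cInf_greatest)
  show "{1 / \<eta> | \<eta> p. prt_feasible X Y S f \<epsilon> \<mu> \<eta> p} \<noteq> {}" using assms(1) by blast
next
  fix x assume "x \<in> {1 / \<eta> | \<eta> p. prt_feasible X Y S f \<epsilon> \<mu> \<eta> p}"
  then obtain \<eta> p where "x = 1 / \<eta>" and feasible: "prt_feasible X Y S f \<epsilon> \<mu> \<eta> p" by blast
  moreover have "\<eta> > 0" using feasible by (simp add: prt_feasible_def)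
  ultimately show "L \<le> x" using assms(2)[OF feasible] by (simp add: le_divide_eq)
qed

definition uniform :: "'c set \<Rightarrow> 'c \<Rightarrow> real" where
  "uniform T s = (if s \<in> T then 1 / card T else 0)"

lemma sum_uniform:
  assumes "finite A" "T \<subseteq> A"
  shows "(\<Sum>s\<in>A. uniform T s * h s) = (\<Sum>s\<in>T. h s) / card T"
proof -
  have "(\<Sum>s\<in>A. uniform T s * h s) = (\<Sum>s\<in>A. if s \<in> T then h s / card T else 0)"
    by (intro sum.cong) (auto simp: uniform_def)
  also have "\<dots> = (\<Sum>s\<in>T. h s / card T)"
    using assms by (simp add: sum.inter_restrict[symmetric] Int_absorb1)
  finally show ?thesis by (simp add: sum_divide_distrib)
qed

definition label_class :: "('a \<times> 'b) set \<Rightarrow> ('a \<times> 'b \<Rightarrow> nat) \<Rightarrow> nat \<Rightarrow> ('a \<times> 'b) set" where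
  "label_class S f b = {s\<in>S. f s = b}"

definition hard_dist :: "'a set \<Rightarrow> 'b set \<Rightarrow> ('a \<times> 'b) set \<Rightarrow> ('a \<times> 'b \<Rightarrow> nat) \<Rightarrow> 'a \<times> 'b \<Rightarrow> real" where
  "hard_dist X Y S f s = 2/7 * uniform (X \<times> Y) s
     + 5/14 * uniform (label_class S f 0) s + 5/14 * uniform (label_class S f 1) s"

lemma hard_dist_distribution:
  assumes "finite X" "finite Y" "S \<subseteq> X \<times> Y"
    and "label_class S f 0 \<noteq> {}" "label_class S f 1 \<noteq> {}"
  shows "distribution X Y (hard_dist X Y S f)"
proof -
  have classes: "label_class S f b \<subseteq> X \<times> Y" for b
    using assms(3) by (auto simp: label_class_def)
  have total: "(\<Sum>s\<in>X \<times> Y. uniform T s) = 1" if "T \<subseteq> X \<times> Y" "T \<noteq> {}" for T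
    using sum_uniform[of "X \<times> Y" T "\<lambda>_. 1"] that assms(1,2) finite_subset[OF that(1)] by simp
  have "X \<times> Y \<noteq> {}" using classes assms(4) by blast
  have "(\<Sum>s\<in>X \<times> Y. hard_dist X Y S f s) = 2/7 * (\<Sum>s\<in>X \<times> Y. uniform (X \<times> Y) s)
      + 5/14 * (\<Sum>s\<in>X \<times> Y. uniform (label_class S f 0) s)
      + 5/14 * (\<Sum>s\<in>X \<times> Y. uniform (label_class S f 1) s)"
    by (simp add: hard_dist_def sum.distrib sum_distrib_left)
  also have "\<dots> = 1"
    using total[OF classes assms(4)] total[OF classes assms(5)] total[OF order_refl \<open>X \<times> Y \<noteq> {}\<close>]
    by simp
  finally show ?thesis
    unfolding distribution_def by (simp add: hard_dist_def uniform_def)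
qed

lemma wrong_mass_lower_bound:
  fixes F :: "('a \<times> 'b) set" and \<alpha> c :: real
  assumes X: "finite X" and Y: "finite Y" and F: "F \<subseteq> X \<times> Y"
    and nonneg: "\<And>R. R \<in> rectangles X Y \<Longrightarrow> p R z \<ge> 0"
    and spread: "\<And>R. R \<in> rectangles X Y \<Longrightarrow>
        real (card (R \<inter> F)) / card F \<ge> \<alpha> * (real (card R) / card (X \<times> Y)) - c"
  shows "card F * (\<alpha> * ((\<Sum>s\<in>X \<times> Y. cover X Y p z s) / card (X \<times> Y)) - c * (\<Sum>R\<in>rectangles X Y. p R z))
      \<le> (\<Sum>s\<in>F. cover X Y p z s)"
proof (cases "F = {}")
  case False
  define n where "n = real (card F)"
  define N where "N = real (card (X \<times> Y))"
  have finF: "finite F" using finite_subset[OF F] X Y by blast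
  have n: "n > 0" using False finF by (simp add: n_def card_gt_0_iff)
  have "n * (\<alpha> * ((\<Sum>s\<in>X \<times> Y. cover X Y p z s) / N) - c * (\<Sum>R\<in>rectangles X Y. p R z))
      = (\<Sum>R\<in>rectangles X Y. p R z * (n * (\<alpha> * (card R / N) - c)))"
    by (simp add: sum_cover_total X Y sum_distrib_left sum_subtractf sum_divide_distrib algebra_simps)
  also have "\<dots> \<le> (\<Sum>R\<in>rectangles X Y. p R z * card (F \<inter> R))"
  proof (rule sum_mono)
    fix R assume R: "R \<in> rectangles X Y"
    have "n * (\<alpha> * (card R / N) - c) \<le> card (F \<inter> R)"
      using spread[OF R] n by (simp add: n_def N_def Int_commute pos_le_divide_eq mult.commute)
    then show "p R z * (n * (\<alpha> * (card R / N) - c)) \<le> p R z * card (F \<inter> R)"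
      using nonneg[OF R] by (rule mult_left_mono)
  qed
  also have "\<dots> = (\<Sum>s\<in>F. cover X Y p z s)"
    by (rule sum_cover[OF X Y finF, symmetric])
  finally show ?thesis by (simp add: n_def N_def)
qed simp

lemma correct_mass_bound:
  fixes F :: "('a \<times> 'b) set" and \<alpha> c :: real
  assumes X: "finite X" and Y: "finite Y" and F: "F \<subseteq> X \<times> Y" "F \<noteq> {}"
    and nonneg: "\<And>R. R \<in> rectangles X Y \<Longrightarrow> p R z \<ge> 0"
    and coverage: "\<And>s. s \<in> X \<times> Y \<Longrightarrow> cover X Y p b s + cover X Y p z s \<le> \<eta>"
    and spread: "\<And>R. R \<in> rectangles X Y \<Longrightarrow>
        real (card (R \<inter> F)) / card F \<ge> \<alpha> * (real (card R) / card (X \<times> Y)) - c"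
  shows "(\<Sum>s\<in>F. cover X Y p b s) / card F
      \<le> \<eta> - \<alpha> * ((\<Sum>s\<in>X \<times> Y. cover X Y p z s) / card (X \<times> Y)) + c * (\<Sum>R\<in>rectangles X Y. p R z)"
proof -
  have n: "card F > 0" using F X Y finite_subset[OF F(1)] by (simp add: card_gt_0_iff)
  have "(\<Sum>s\<in>F. cover X Y p b s + cover X Y p z s) \<le> card F * \<eta>"
    using coverage F(1) by (intro sum_bounded_above) auto
  with wrong_mass_lower_bound[where p = p and z = z and \<alpha> = \<alpha> and c = c, OF X Y F(1) nonneg spread]
  have "(\<Sum>s\<in>F. cover X Y p b s) \<le> card F * (\<eta> - \<alpha> * ((\<Sum>s\<in>X \<times> Y. cover X Y p z s) / card (X \<times> Y))
      + c * (\<Sum>R\<in>rectangles X Y. p R z))"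
    by (simp add: sum.distrib algebra_simps)
  then show ?thesis
    using n by (simp add: pos_divide_le_eq mult.commute)
qed

lemma hard_dist_success_split:
  assumes X: "finite X" and Y: "finite Y" and SXY: "S \<subseteq> X \<times> Y"
    and f01: "\<forall>s\<in>S. f s \<in> {0, 1}"
    and nonneg: "\<And>R. R \<in> rectangles X Y \<Longrightarrow> p R 0 \<ge> 0 \<and> p R 1 \<ge> 0"
  defines "C \<equiv> cover X Y p" and "F \<equiv> label_class S f" and "N \<equiv> real (card (X \<times> Y))"
  shows "(\<Sum>s\<in>S. hard_dist X Y S f s * C (f s) s)
        + (\<Sum>s\<in>X \<times> Y - S. hard_dist X Y S f s * (C 0 s + C 1 s))
      \<le> 2/7 * ((\<Sum>s\<in>X \<times> Y. C 0 s) / N) + 2/7 * ((\<Sum>s\<in>X \<times> Y. C 1 s) / N)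
        + 5/14 * ((\<Sum>s\<in>F 0. C 0 s) / card (F 0)) + 5/14 * ((\<Sum>s\<in>F 1. C 1 s) / card (F 1))"
proof -
  define bound where "bound s = 2/7 * uniform (X \<times> Y) s * (C 0 s + C 1 s)
      + 5/14 * uniform (F 0) s * C 0 s + 5/14 * uniform (F 1) s * C 1 s" for s
  have C_nonneg: "C 0 s \<ge> 0" "C 1 s \<ge> 0" for s
    unfolding C_def using nonneg by (auto intro: cover_nonneg)
  have F_sub: "F b \<subseteq> S" for b by (auto simp: F_def label_class_def)
  have "(\<Sum>s\<in>S. hard_dist X Y S f s * C (f s) s) \<le> (\<Sum>s\<in>S. bound s)"
  proof (rule sum_mono)
    fix s assume s: "s \<in> S"
    then consider "s \<in> F 0" "s \<notin> F 1" "f s = 0" | "s \<in> F 1" "s \<notin> F 0" "f s = 1"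
      using f01 by (auto simp: F_def label_class_def)
    then show "hard_dist X Y S f s * C (f s) s \<le> bound s"
      using C_nonneg[of s] SXY s
      by cases (auto simp: hard_dist_def bound_def F_def uniform_def algebra_simps)
  qed
  moreover have "(\<Sum>s\<in>X \<times> Y - S. hard_dist X Y S f s * (C 0 s + C 1 s)) = (\<Sum>s\<in>X \<times> Y - S. bound s)"
    using F_sub by (intro sum.cong) (auto simp: hard_dist_def bound_def F_def uniform_def)
  moreover have "(\<Sum>s\<in>S. bound s) + (\<Sum>s\<in>X \<times> Y - S. bound s) = (\<Sum>s\<in>X \<times> Y. bound s)"
    using sum.subset_diff[OF SXY finite_cartesian_product[OF X Y], of bound] by simp
  moreover have "(\<Sum>s\<in>X \<times> Y. bound s) = 2/7 * (\<Sum>s\<in>X \<times> Y. uniform (X \<times> Y) s * (C 0 s + C 1 s))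
      + 5/14 * (\<Sum>s\<in>X \<times> Y. uniform (F 0) s * C 0 s) + 5/14 * (\<Sum>s\<in>X \<times> Y. uniform (F 1) s * C 1 s)"
    by (simp only: bound_def sum.distrib sum_distrib_left mult.assoc)
  moreover have "F b \<subseteq> X \<times> Y" for b using F_sub SXY by blast
  ultimately show ?thesis
    using X Y by (simp add: sum_uniform sum.distrib add_divide_distrib N_def)
qed

lemma hard_dist_success_bound:
  fixes c :: real
  assumes X: "finite X" and Y: "finite Y" and SXY: "S \<subseteq> X \<times> Y"
    and f01: "\<forall>s\<in>S. f s \<in> {0, 1}"
    and nonempty: "label_class S f 0 \<noteq> {}" "label_class S f 1 \<noteq> {}"
    and spread: "\<forall>R\<in>rectangles X Y. \<forall>b\<in>{0::nat, 1}.
           real (card (R \<inter> label_class S f b)) / card (label_class S f b)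
             \<ge> 0.8 * (real (card R) / card (X \<times> Y)) - c"
    and feasible: "prt_feasible X Y S f \<epsilon> (hard_dist X Y S f) \<eta> p"
  shows "(0.8 - 2.8 * \<epsilon>) * \<eta> \<le> c"
proof -
  define C where "C = cover X Y p"
  define F where "F = label_class S f"
  define q where "q z = (\<Sum>s\<in>X \<times> Y. C z s) / card (X \<times> Y)" for z
  define P where "P z = (\<Sum>R\<in>rectangles X Y. p R z)" for z
  have nonneg: "\<And>R. R \<in> rectangles X Y \<Longrightarrow> p R 0 \<ge> 0 \<and> p R 1 \<ge> 0"
    and success: "(1 - \<epsilon>) * \<eta> \<le> (\<Sum>s\<in>S. hard_dist X Y S f s * C (f s) s)
        + (\<Sum>s\<in>X \<times> Y - S. hard_dist X Y S f s * (C 0 s + C 1 s))"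
    and coverage: "\<And>s. s \<in> X \<times> Y \<Longrightarrow> C 0 s + C 1 s \<le> \<eta>"
    and total: "c * P 0 + c * P 1 = c"
    using feasible unfolding prt_feasible_cover C_def P_def by (auto simp flip: distrib_left)
  have mass: "(\<Sum>s\<in>F b. C b s) / card (F b) \<le> \<eta> - 0.8 * q z + c * P z"
    if bz: "b \<in> {0, 1}" "z \<in> {0, 1}" "b \<noteq> z" for b z
    unfolding C_def q_def P_def
  proof (rule correct_mass_bound[OF X Y])
    show "F b \<subseteq> X \<times> Y" "F b \<noteq> {}" using SXY nonempty bz by (auto simp: F_def label_class_def)
    show "p R z \<ge> 0" if "R \<in> rectangles X Y" for R using nonneg[OF that] bz by auto
    show "cover X Y p b s + cover X Y p z s \<le> \<eta>" if "s \<in> X \<times> Y" for s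
      using coverage[OF that] bz by (auto simp: C_def add.commute)
    show "real (card (R \<inter> F b)) / card (F b) \<ge> 0.8 * (real (card R) / card (X \<times> Y)) - c"
      if "R \<in> rectangles X Y" for R using spread that bz by (auto simp: F_def)
  qed
  have "(1 - \<epsilon>) * \<eta> \<le> 2/7 * q 0 + 2/7 * q 1
      + 5/14 * ((\<Sum>s\<in>F 0. C 0 s) / card (F 0)) + 5/14 * ((\<Sum>s\<in>F 1. C 1 s) / card (F 1))"
    using success hard_dist_success_split[where p = p, OF X Y SXY f01 nonneg]
    unfolding C_def F_def q_def by linarith
  also have "\<dots> \<le> 5/7 * \<eta> + 5/14 * c"
    using mass[of 0 1] mass[of 1 0] total by simp
  finally show ?thesis by (simp add: algebra_simps)
qed

theorem mainTheorem8:
  fixes X :: "'a set" and Y :: "'b set" and S :: "('a \<times> 'b) set"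
    and f :: "'a \<times> 'b \<Rightarrow> nat" and c :: real
  assumes "finite X" and "finite Y" and "S \<subseteq> X \<times> Y"
    and "\<forall>s\<in>S. f s \<in> {0, 1}"
    and "{s\<in>S. f s = 0} \<noteq> {}" and "{s\<in>S. f s = 1} \<noteq> {}"
    and "c > 0"
    and "\<forall>R\<in>rectangles X Y. \<forall>b\<in>{0::nat, 1}.
           real (card (R \<inter> {s\<in>S. f s = b})) / real (card {s\<in>S. f s = b})
             \<ge> 0.8 * (real (card R) / real (card (X \<times> Y))) - c"
  shows "\<forall>\<epsilon>::real. \<epsilon> \<ge> 0 \<longrightarrow> prt_bar X Y S f \<epsilon> \<ge> (1 / c) * (0.8 - 2.8 * \<epsilon>)"
proof (intro allI impI)
  fix \<epsilon> :: real assume \<epsilon>: "\<epsilon> \<ge> 0"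
  note classes = assms(5,6)[folded label_class_def]
  have ne: "X \<times> Y \<noteq> {}" using assms(3,5) by blast
  have \<mu>: "distribution X Y (hard_dist X Y S f)"
    using hard_dist_distribution[OF assms(1-3) classes] .
  have "(1 / c) * (0.8 - 2.8 * \<epsilon>) \<le> prt_mu X Y S f \<epsilon> (hard_dist X Y S f)"
  proof (rule prt_mu_lower_bound)
    show "\<exists>\<eta> p. prt_feasible X Y S f \<epsilon> (hard_dist X Y S f) \<eta> p"
      using trivial_protocol_feasible[OF assms(1-4) ne \<mu> \<epsilon>] by blast
    fix \<eta> p assume "prt_feasible X Y S f \<epsilon> (hard_dist X Y S f) \<eta> p"
    then have "(0.8 - 2.8 * \<epsilon>) * \<eta> \<le> c"
      using hard_dist_success_bound[OF assms(1-4) classes] assms(8) by (simp add: label_class_def)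
    then show "(1 / c) * (0.8 - 2.8 * \<epsilon>) * \<eta> \<le> 1"
      using assms(7) by (simp add: field_simps)
  qed
  also have "\<dots> \<le> prt_bar X Y S f \<epsilon>"
    using prt_mu_le_prt_bar[OF assms(1-4) ne \<mu> \<epsilon>] .
  finally show "prt_bar X Y S f \<epsilon> \<ge> (1 / c) * (0.8 - 2.8 * \<epsilon>)" .
qed

end
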